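(* Let $X\in\mathbb{R}^{N\times D}$, $y\in\mathbb{R}^N$ be partitioned into row blocks $X_i\in\mathbb{R}^{N_i\times D}$, $y_i\in\mathbb{R}^{N_i}$, $i\in[E]$, with $\sum_i N_i = N$. Write $Z = X^\top X$ and $Z_i = X_i^\top X_i$, and assume every $Z_i$ is invertible (hence so is $Z=\sum_i Z_i$). Let $w^* = Z^{-1}X^\top y$ and $w_i^* = Z_i^{-1}X_i^\top y_i$. Suppose that for each $i\in[E]$ there are $\beta_i\in\mathbb{R}^D$ and $r_i\in\mathbb{R}^{N_i}$ with $y_i = X_i\beta_i + r_i$. Define $\eta_i = Z_i^{-1}X_i^\top r_i$, $\eta = Z^{-1}X^\top r$ where $r\in\mathbb{R}^N$ is the concatenation of $r_1,\dots,r_E$, and for $i\neq j$ let $\Delta_{ij} = Z^{-1}Z_j(\beta_i-\beta_j)$ and $\Delta_i = \sum_{j\neq i}\Delta_{ij}$. Let $\gamma\in(0,1]$. If $$\|\Delta_i\| \ge \|\beta_i + \eta\| + \frac{1}{\sqrt{\gamma}}\|\beta_i+\eta_i\| \quad\text{for all } i\in[E],$$ then $\max_{i\in[E]}\|w_i^*\|^2 \le \gamma\|w^*\|^2$. Moreover, if $\|\eta\|\le \min_{i\in[E]}\|\beta_i\|$ and $\|\eta_i\|\le\|\beta_i\|$ for all $i\in[E]$, then the same conclusion $\max_{i}\|w_i^*\|^2\le\gamma\|w^*\|^2$ holds under the condition $\min_{i\in[E]}\big\{\|\Delta_i\| - \tfrac{4}{\sqrt{\gamma}}\|\beta_i\|\big\}\ge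 0$.
   Context: $\|\cdot\|$ denotes the Euclidean norm and $[E]=\{1,\dots,E\}$. $w^*$ is the least-squares solution of $\min_w\|Xw-y\|^2$ and $w_i^*$ that of $\min_{w_i}\|X_iw_i-y_i\|^2$. *)

theory Defs
  imports "HOL-Analysis.Analysis"
begin

text \<open>Row-block partition: the rows of X (indexed by the finite type 'n) are
assigned to blocks by blk :: 'n => nat with values in {1..E}.  The block
matrix X_i is represented by zeroing all rows outside block i; then
X_i^T X_i and X_i^T y_i are unchanged.\<close>

definition blockmat :: "('n \<Rightarrow> nat) \<Rightarrow> nat \<Rightarrow> real^'d^'n \<Rightarrow> real^'d^'n" where
  "blockmat blk i X = (\<chi> k. if blk k = i then X $ k else 0)"

definition blockvec :: "('n \<Rightarrow> nat) \<Rightarrow> nat \<Rightarrow> real^'n \<Rightarrow> real^'n" where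
  "blockvec blk i y = (\<chi> k. if blk k = i then y $ k else 0)"

definition gram :: "real^'d^'n \<Rightarrow> real^'d^'d" where
  "gram X = transpose X ** X"

definition lsq :: "real^'d^'n \<Rightarrow> real^'n \<Rightarrow> real^'d" where
  "lsq X y = matrix_inv (gram X) *v (transpose X *v y)"

end

theory Submission imports Defs begin

text \<open>Write \<open>Z = X\<^sup>TX\<close>, \<open>Z\<^sub>j = X\<^sub>j\<^sup>TX\<^sub>j\<close> and \<open>S = \<Sum>\<^sub>j Z\<^sub>j\<beta>\<^sub>j\<close>. Since \<open>X\<^sup>Ty = \<Sum>\<^sub>j X\<^sub>j\<^sup>Ty\<^sub>j\<close>
  and \<open>Z = \<Sum>\<^sub>j Z\<^sub>j\<close>, the linear model gives \<open>w\<^sub>i\<^sup>* = \<beta>\<^sub>i + \<eta>\<^sub>i\<close>, \<open>w\<^sup>* = Z\<^sup>-\<^sup>1S + \<eta>\<close> and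
  \<open>\<Delta>\<^sub>i = \<beta>\<^sub>i - Z\<^sup>-\<^sup>1S\<close>, i.e. \<open>\<Delta>\<^sub>i = (\<beta>\<^sub>i + \<eta>) - w\<^sup>*\<close>. The triangle inequality then turns
  the separation hypothesis into \<open>\<parallel>w\<^sub>i\<^sup>*\<parallel> \<le> \<surd>\<gamma> \<parallel>w\<^sup>*\<parallel>\<close>. Under the noise bounds
  \<open>\<parallel>\<beta>\<^sub>i + \<eta>\<parallel>\<close> and \<open>\<parallel>\<beta>\<^sub>i + \<eta>\<^sub>i\<parallel>\<close> are at most \<open>2\<parallel>\<beta>\<^sub>i\<parallel>\<close>, and \<open>1 \<le> 1/\<surd>\<gamma>\<close> reduces the
  second claim to the first.\<close>

declare transpose_matrix_vector [simp del]

lemma matrix_inv_left: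
  fixes A :: "'a::semiring_1^'n^'n"
  assumes "invertible A"
  shows "matrix_inv A ** A = mat 1"
  using someI_ex[OF assms[unfolded invertible_def]] unfolding matrix_inv_def by blast

lemma matrix_inv_mult_vector_cancel:
  fixes A :: "'a::semiring_1^'n^'n"
  assumes "invertible A"
  shows "matrix_inv A *v (A *v v) = v"
  by (simp add: matrix_vector_mul_assoc matrix_inv_left[OF assms])

lemma matrix_vector_mult_sum: "(A::'a::semiring_1^'m^'n) *v sum f S = (\<Sum>x\<in>S. A *v f x)"
  by (induct S rule: infinite_finite_induct) (auto simp: matrix_vector_right_distrib)

lemma blockmat_mult_vector: "blockmat blk i X *v v = blockvec blk i (X *v v)"
  by (simp add: blockmat_def blockvec_def matrix_vector_mult_def vec_eq_iff)

lemma blockvec_linear_model: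
  assumes "\<And>k. y $ k = (X $ k) \<bullet> \<beta> (blk k) + r $ k"
  shows "blockvec blk i y = blockmat blk i X *v \<beta> i + blockvec blk i r"
  by (auto simp: blockmat_def blockvec_def vec_eq_iff assms matrix_mult_dot)

lemma transpose_mult_vector_block_sum:
  fixes X :: "real^'d^'n"
  assumes "finite I" and "\<And>k. blk k \<in> I"
  shows "transpose X *v v = (\<Sum>j\<in>I. transpose (blockmat blk j X) *v blockvec blk j v)"
  unfolding vec_eq_iff
proof
  fix a
  have "(\<Sum>j\<in>I. transpose (blockmat blk j X) *v blockvec blk j v) $ a
      = (\<Sum>j\<in>I. \<Sum>k\<in>UNIV. if blk k = j then X $ k $ a * v $ k else 0)"
    by (simp add: sum_component matrix_vector_mult_def transpose_def blockmat_def blockvec_def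
        if_distrib cong: if_cong)
  also have "\<dots> = (\<Sum>k\<in>UNIV. \<Sum>j\<in>I. if blk k = j then X $ k $ a * v $ k else 0)"
    by (rule sum.swap)
  also have "\<dots> = (transpose X *v v) $ a"
    using assms by (simp add: sum.delta matrix_vector_mult_def transpose_def)
  finally show "(transpose X *v v) $ a = (\<Sum>j\<in>I. transpose (blockmat blk j X) *v blockvec blk j v) $ a"
    by simp
qed

lemma gram_mult_vector_block_sum:
  fixes X :: "real^'d^'n"
  assumes "finite I" and "\<And>k. blk k \<in> I"
  shows "gram X *v v = (\<Sum>j\<in>I. gram (blockmat blk j X) *v v)"
  using transpose_mult_vector_block_sum[OF assms, of X "X *v v"]
  by (simp add: gram_def matrix_vector_mul_assoc[symmetric] blockmat_mult_vector)

lemma invertible_gram_iff: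
  fixes X :: "real^'d^'n"
  shows "invertible (gram X) \<longleftrightarrow> (\<forall>v. X *v v = 0 \<longrightarrow> v = 0)"
proof
  assume "invertible (gram X)"
  then show "\<forall>v. X *v v = 0 \<longrightarrow> v = 0"
    by (metis gram_def matrix_inv_mult_vector_cancel matrix_vector_mul_assoc matrix_vector_mult_0_right)
next
  assume ker: "\<forall>v. X *v v = 0 \<longrightarrow> v = 0"
  have "v = 0" if "gram X *v v = 0" for v
  proof -
    have "(X *v v) \<bullet> (X *v v) = v \<bullet> (gram X *v v)"
      using dot_lmul_matrix[of v "transpose X" "X *v v"] by (simp add: gram_def matrix_vector_mul_assoc)
    then show "v = 0" using that ker by simp
  qed
  then show "invertible (gram X)"
    by (simp add: invertible_left_inverse matrix_left_invertible_ker)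
qed

lemma invertible_gram_if_invertible_block_gram:
  fixes X :: "real^'d^'n"
  assumes "invertible (gram (blockmat blk i X))"
  shows "invertible (gram X)"
  using assms by (simp add: invertible_gram_iff blockmat_mult_vector blockvec_def vec_eq_iff)

lemma lsq_linear_model:
  fixes X :: "real^'d^'n"
  assumes "invertible (gram X)"
  shows "lsq X (X *v \<beta> + r) = \<beta> + lsq X r"
  by (simp add: lsq_def gram_def matrix_vector_right_distrib matrix_vector_mul_assoc
      matrix_inv_left[OF assms[unfolded gram_def]])

lemma lsq_blockwise_linear_model:
  fixes X :: "real^'d^'n"
  assumes "finite I" and blk: "\<And>k. blk k \<in> I"
    and model: "\<And>k. y $ k = (X $ k) \<bullet> \<beta> (blk k) + r $ k"
  shows "lsq X y = matrix_inv (gram X) *v (\<Sum>j\<in>I. gram (blockmat blk j X) *v \<beta> j) + lsq X r"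
proof -
  have "transpose X *v y = (\<Sum>j\<in>I. transpose (blockmat blk j X) *v blockvec blk j y)"
    by (rule transpose_mult_vector_block_sum[OF assms(1,2)])
  also have "\<dots> = (\<Sum>j\<in>I. gram (blockmat blk j X) *v \<beta> j
                          + transpose (blockmat blk j X) *v blockvec blk j r)"
    by (simp add: blockvec_linear_model[OF model] matrix_vector_right_distrib
        matrix_vector_mul_assoc gram_def)
  also have "\<dots> = (\<Sum>j\<in>I. gram (blockmat blk j X) *v \<beta> j) + transpose X *v r"
    using transpose_mult_vector_block_sum[OF assms(1,2), of X r] by (simp add: sum.distrib)
  finally show ?thesis
    by (simp add: lsq_def matrix_vector_right_distrib)
qed

lemma heterogeneity_sum_eq:
  fixes X :: "real^'d^'n"
  assumes "finite I" and "\<And>k. blk k \<in> I" and "invertible (gram X)" and "i \<in> I"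
  shows "(\<Sum>j\<in>I - {i}. matrix_inv (gram X) *v (gram (blockmat blk j X) *v (\<beta> i - \<beta> j)))
       = \<beta> i - matrix_inv (gram X) *v (\<Sum>j\<in>I. gram (blockmat blk j X) *v \<beta> j)"
proof -
  \<comment> \<open>the summand for \<open>j = i\<close> vanishes, so the sum may run over all of \<open>I\<close>\<close>
  have "(\<Sum>j\<in>I - {i}. gram (blockmat blk j X) *v (\<beta> i - \<beta> j))
      = (\<Sum>j\<in>I. gram (blockmat blk j X) *v (\<beta> i - \<beta> j))"
    using sum.remove[OF assms(1,4), of "\<lambda>j. gram (blockmat blk j X) *v (\<beta> i - \<beta> j)"] by simp
  also have "\<dots> = (\<Sum>j\<in>I. gram (blockmat blk j X) *v \<beta> i) - (\<Sum>j\<in>I. gram (blockmat blk j X) *v \<beta> j)"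
    by (simp add: matrix_vector_mult_diff_distrib sum_subtractf)
  also have "\<dots> = gram X *v \<beta> i - (\<Sum>j\<in>I. gram (blockmat blk j X) *v \<beta> j)"
    using gram_mult_vector_block_sum[OF assms(1,2), of X "\<beta> i"] by simp
  finally have sum_eq: "(\<Sum>j\<in>I - {i}. gram (blockmat blk j X) *v (\<beta> i - \<beta> j))
      = gram X *v \<beta> i - (\<Sum>j\<in>I. gram (blockmat blk j X) *v \<beta> j)" .
  have "(\<Sum>j\<in>I - {i}. matrix_inv (gram X) *v (gram (blockmat blk j X) *v (\<beta> i - \<beta> j)))
      = matrix_inv (gram X) *v (\<Sum>j\<in>I - {i}. gram (blockmat blk j X) *v (\<beta> i - \<beta> j))"
    by (simp only: matrix_vector_mult_sum)
  also have "\<dots> = \<beta> i - matrix_inv (gram X) *v (\<Sum>j\<in>I. gram (blockmat blk j X) *v \<beta> j)"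
    unfolding sum_eq by (simp add: matrix_vector_mult_diff_distrib matrix_inv_mult_vector_cancel[OF assms(3)])
  finally show ?thesis .
qed

lemma norm_sq_le_if_separated:
  fixes a b w :: "'a::real_normed_vector"
  assumes "0 < \<gamma>" and "norm a + (1 / sqrt \<gamma>) * norm b \<le> norm (a - w)"
  shows "(norm b)\<^sup>2 \<le> \<gamma> * (norm w)\<^sup>2"
proof -
  have "(1 / sqrt \<gamma>) * norm b \<le> norm w"
    using assms(2) norm_triangle_ineq4[of a w] by linarith
  then have "norm b \<le> sqrt \<gamma> * norm w"
    using assms(1) by (simp add: field_simps)
  then have "(norm b)\<^sup>2 \<le> (sqrt \<gamma> * norm w)\<^sup>2"
    by (simp add: power_mono)
  then show ?thesis
    using assms(1) by (simp add: power_mult_distrib)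
qed

lemma separated_if_small_noise:
  fixes b d e e' :: "'a::real_normed_vector"
  assumes "0 < \<gamma>" "\<gamma> \<le> 1" and "norm e \<le> norm b" "norm e' \<le> norm b"
    and "(4 / sqrt \<gamma>) * norm b \<le> norm d"
  shows "norm (b + e) + (1 / sqrt \<gamma>) * norm (b + e') \<le> norm d"
proof -
  let ?c = "1 / sqrt \<gamma>"
  have "1 \<le> ?c"
    using assms(1,2) by (simp add: real_sqrt_le_1_iff)
  have "norm (b + e) \<le> 2 * norm b" and be': "norm (b + e') \<le> 2 * norm b"
    using assms(3,4) norm_triangle_ineq[of b e] norm_triangle_ineq[of b e'] by simp_all
  moreover have "2 * norm b \<le> ?c * (2 * norm b)"
    using mult_right_mono[OF \<open>1 \<le> ?c\<close>, of "2 * norm b"] by simp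
  moreover have "?c * norm (b + e') \<le> ?c * (2 * norm b)"
    using mult_left_mono[OF be', of ?c] assms(1) by simp
  ultimately have "norm (b + e) + ?c * norm (b + e') \<le> ?c * (2 * norm b) + ?c * (2 * norm b)"
    by linarith
  also have "\<dots> = (4 / sqrt \<gamma>) * norm b"
    by simp
  finally show ?thesis
    using assms(5) by linarith
qed

theorem theorem2:
  fixes X :: "real^'d^'n" and y r :: "real^'n"
    and E :: nat and blk :: "'n \<Rightarrow> nat"
    and \<beta> :: "nat \<Rightarrow> real^'d" and \<gamma> :: real
  assumes blk: "\<And>k. blk k \<in> {1..E}"
    and inv: "\<And>i. i \<in> {1..E} \<Longrightarrow> invertible (gram (blockmat blk i X))"
    and model: "\<And>k. y $ k = (X $ k) \<bullet> \<beta> (blk k) + r $ k"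
    and gam: "0 < \<gamma>" "\<gamma> \<le> 1"
  defines "wstar \<equiv> lsq X y"
    and "wb \<equiv> (\<lambda>i. lsq (blockmat blk i X) (blockvec blk i y))"
    and "\<eta> \<equiv> lsq X r"
    and "\<eta>b \<equiv> (\<lambda>i. lsq (blockmat blk i X) (blockvec blk i r))"
    and "\<Delta> \<equiv> (\<lambda>i. \<Sum>j\<in>{1..E} - {i}. matrix_inv (gram X) *v (gram (blockmat blk j X) *v (\<beta> i - \<beta> j)))"
  shows "((\<forall>i\<in>{1..E}. norm (\<Delta> i) \<ge> norm (\<beta> i + \<eta>) + (1 / sqrt \<gamma>) * norm (\<beta> i + \<eta>b i))
            \<longrightarrow> Max ((\<lambda>i. (norm (wb i))\<^sup>2) ` {1..E}) \<le> \<gamma> * (norm wstar)\<^sup>2)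
       \<and> ((norm \<eta> \<le> Min ((\<lambda>i. norm (\<beta> i)) ` {1..E})
            \<and> (\<forall>i\<in>{1..E}. norm (\<eta>b i) \<le> norm (\<beta> i))
            \<and> Min ((\<lambda>i. norm (\<Delta> i) - (4 / sqrt \<gamma>) * norm (\<beta> i)) ` {1..E}) \<ge> 0)
            \<longrightarrow> Max ((\<lambda>i. (norm (wb i))\<^sup>2) ` {1..E}) \<le> \<gamma> * (norm wstar)\<^sup>2)"
proof -
  obtain k0 :: 'n where True by simp
  have nonempty: "{1..E} \<noteq> {}" using blk[of k0] by auto
  have invZ: "invertible (gram X)"
    using inv[OF blk[of k0]] by (rule invertible_gram_if_invertible_block_gram)
  have wb: "wb i = \<beta> i + \<eta>b i" if "i \<in> {1..E}" for i
    using lsq_linear_model[OF inv[OF that]] by (simp add: wb_def \<eta>b_def blockvec_linear_model[OF model])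
  have \<Delta>: "\<Delta> i = (\<beta> i + \<eta>) - wstar" if "i \<in> {1..E}" for i
    using heterogeneity_sum_eq[OF finite_atLeastAtMost blk invZ that]
      lsq_blockwise_linear_model[OF finite_atLeastAtMost blk model]
    by (simp add: \<Delta>_def wstar_def \<eta>_def)
  have "Max ((\<lambda>i. (norm (wb i))\<^sup>2) ` {1..E}) \<le> \<gamma> * (norm wstar)\<^sup>2"
    if "\<forall>i\<in>{1..E}. norm (\<Delta> i) \<ge> norm (\<beta> i + \<eta>) + (1 / sqrt \<gamma>) * norm (\<beta> i + \<eta>b i)"
    using that nonempty norm_sq_le_if_separated[OF gam(1)] by (auto simp: Max_le_iff wb \<Delta>)
  moreover have "\<forall>i\<in>{1..E}. norm (\<Delta> i) \<ge> norm (\<beta> i + \<eta>) + (1 / sqrt \<gamma>) * norm (\<beta> i + \<eta>b i)"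
    if "norm \<eta> \<le> Min ((\<lambda>i. norm (\<beta> i)) ` {1..E})" "\<forall>i\<in>{1..E}. norm (\<eta>b i) \<le> norm (\<beta> i)"
      "Min ((\<lambda>i. norm (\<Delta> i) - (4 / sqrt \<gamma>) * norm (\<beta> i)) ` {1..E}) \<ge> 0"
    using that nonempty by (intro ballI separated_if_small_noise[OF gam]) (auto simp: Min_ge_iff)
  ultimately show ?thesis by blast
qed

end
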